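(* Let $X$ and $Y$ be topological spaces, let $f: X \to X$ and $g: Y \to Y$ be maps, and let $\Phi: X \to \mathbb{R}^n$ and $\Psi: Y \to \mathbb{R}^n$ be probe functions. Suppose $h: X \to Y$ is continuous and surjective with $h \circ f = g \circ h$, and that $h$ is descriptively continuous. If $f$ is descriptively transitive with respect to $\Phi$, then $g$ is descriptively transitive with respect to $\Psi$.
   Context: A probe function is an arbitrary function into $\mathbb{R}^n$; for $A \subseteq X$ write $\Phi(A) = \{\Phi(a) : a \in A\}$. Subsets $A, B \subseteq X$ are descriptively near, written $A \,\delta_{\Phi}\, B$, if $\Phi(A) \cap \Phi(B) \neq \emptyset$ (similarly $\delta_{\Psi}$ on $Y$). The map $h$ is descriptively continuous if $A \,\delta_{\Phi}\, B$ implies $h(A) \,\delta_{\Psi}\, h(B)$ for all $A, B \subseteq X$. The descriptive intersection is $A \cap_{\Phi} B = \{x \in A \cup B : \Phi(x) \in \Phi(A) \cap \Phi(B)\}$. A map $f$ is descriptively transitive with respect to $\Phi$ if for all nonempty open $U, V \subseteq X$ there is an integer $k > 0$ with $f^k(U) \cap_{\Phi} V \neq \emptyset$ (analogously for $g$ and $\Psi$ on $Y$). *)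

theory Defs
  imports "HOL-Analysis.Analysis"
begin

definition desc_near :: "('a \<Rightarrow> real ^ 'n) \<Rightarrow> 'a set \<Rightarrow> 'a set \<Rightarrow> bool" where
  "desc_near \<Phi> A B \<longleftrightarrow> \<Phi> ` A \<inter> \<Phi> ` B \<noteq> {}"

definition desc_continuous ::
  "('a \<Rightarrow> real ^ 'n) \<Rightarrow> ('b \<Rightarrow> real ^ 'n) \<Rightarrow> ('a \<Rightarrow> 'b) \<Rightarrow> bool" where
  "desc_continuous \<Phi> \<Psi> h \<longleftrightarrow>
     (\<forall>A B. desc_near \<Phi> A B \<longrightarrow> desc_near \<Psi> (h ` A) (h ` B))"

definition desc_inter :: "('a \<Rightarrow> real ^ 'n) \<Rightarrow> 'a set \<Rightarrow> 'a set \<Rightarrow> 'a set" where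
  "desc_inter \<Phi> A B = {x \<in> A \<union> B. \<Phi> x \<in> \<Phi> ` A \<inter> \<Phi> ` B}"

definition desc_transitive :: "('a::topological_space \<Rightarrow> real ^ 'n) \<Rightarrow> ('a \<Rightarrow> 'a) \<Rightarrow> bool" where
  "desc_transitive \<Phi> f \<longleftrightarrow>
     (\<forall>U V. open U \<and> U \<noteq> {} \<and> open V \<and> V \<noteq> {} \<longrightarrow>
        (\<exists>k::nat. k > 0 \<and> desc_inter \<Phi> ((f ^^ k) ` U) V \<noteq> {}))"

end

theory Submission
  imports Defs
begin

text \<open>Pull the open sets U, V of Y back along h: their preimages are open and, by surjectivity,
  nonempty, so transitivity of f yields k with the k-th iterate of the first preimage
  descriptively near the second. Pushing forward by h preserves descriptive nearness, and since
  h semiconjugates f to g and is surjective, the images are exactly the k-th iterate of U and V.\<close>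

lemma desc_inter_eq_empty_iff: "desc_inter \<Phi> A B = {} \<longleftrightarrow> \<not> desc_near \<Phi> A B"
  unfolding desc_inter_def desc_near_def by blast

lemma funpow_semiconj:
  assumes "h \<circ> f = g \<circ> h"
  shows "h \<circ> f ^^ k = g ^^ k \<circ> h"
proof (induction k)
  case 0
  then show ?case by simp
next
  case (Suc k)
  have "h \<circ> f ^^ Suc k = (h \<circ> f ^^ k) \<circ> f"
    by (simp only: funpow_Suc_right comp_assoc)
  also have "\<dots> = g ^^ k \<circ> (h \<circ> f)"
    by (simp only: Suc.IH comp_assoc)
  also have "\<dots> = g ^^ Suc k \<circ> h"
    by (simp only: assms funpow_Suc_right comp_assoc)
  finally show ?case .
qed

lemma image_funpow_vimage_semiconj:
  assumes "surj h" and "h \<circ> f = g \<circ> h"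
  shows "h ` (f ^^ k) ` (h -` U) = (g ^^ k) ` U"
proof -
  have "h ` (f ^^ k) ` (h -` U) = (g ^^ k \<circ> h) ` (h -` U)"
    by (simp add: image_comp funpow_semiconj[OF assms(2)] del: image_vimage_eq)
  also have "\<dots> = (g ^^ k) ` U"
    using assms(1) by (metis image_comp surj_image_vimage_eq)
  finally show ?thesis .
qed

theorem lemma3:
  fixes f :: "'a::topological_space \<Rightarrow> 'a" and g :: "'b::topological_space \<Rightarrow> 'b"
    and \<Phi> :: "'a \<Rightarrow> real ^ 'n" and \<Psi> :: "'b \<Rightarrow> real ^ 'n"
    and h :: "'a \<Rightarrow> 'b"
  assumes "continuous_on UNIV h" and "surj h" and "h \<circ> f = g \<circ> h"
    and "desc_continuous \<Phi> \<Psi> h"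
    and "desc_transitive \<Phi> f"
  shows "desc_transitive \<Psi> g"
  unfolding desc_transitive_def
proof (intro allI impI)
  fix U V :: "'b set"
  assume UV: "open U \<and> U \<noteq> {} \<and> open V \<and> V \<noteq> {}"
  then have "open (h -` U)" "open (h -` V)" "h -` U \<noteq> {}" "h -` V \<noteq> {}"
    using assms(1,2) by (auto simp: continuous_on_open_vimage surj_vimage_empty)
  then obtain k where "k > 0" and "desc_near \<Phi> ((f ^^ k) ` (h -` U)) (h -` V)"
    using assms(5) unfolding desc_transitive_def desc_inter_eq_empty_iff by blast
  then have "desc_near \<Psi> (h ` (f ^^ k) ` (h -` U)) (h ` h -` V)"
    using assms(4) unfolding desc_continuous_def by blast
  then have "desc_near \<Psi> ((g ^^ k) ` U) V"
    using assms(2,3) by (simp add: image_funpow_vimage_semiconj surj_image_vimage_eq)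
  with \<open>k > 0\<close> show "\<exists>k>0. desc_inter \<Psi> ((g ^^ k) ` U) V \<noteq> {}"
    unfolding desc_inter_eq_empty_iff by blast
qed

end
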